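(* Let $H$ be an atomic hypergraph and suppose the rank $r=|\bigcup H|-n$ of $\mathcal A(H)$ (with $n$ the connectedness number of $H$) satisfies $r>0$. Then every vertex of $\mathcal A(H)$ is contained in exactly $r$ facets of $\mathcal A(H)$ (i.e. is $\le$-comparable with exactly $r$ faces of rank $r-1$).
   Context: A hypergraph is a finite set $H$ of nonempty subsets of some finite set; its carrier is $\bigcup H$. For a family $F$ and set $Y$, $F_Y=\{X\in F\mid X\subseteq Y\}$. A hypergraph partition of $H$ is a partition $\{H_1,\dots,H_n\}$ ($n\ge0$) of the set $H$ with $\{\bigcup H_1,\dots,\bigcup H_n\}$ a partition of $\bigcup H$; $H$ is connected if it has exactly one hypergraph partition; the finest hypergraph partition is the unique one whose blocks are connected; its blocks are the connected components, the sets $\bigcup H_i$ are the connected components of the carrier, and their number $n$ is the connectedness number. $H$ is atomic if $\{x\}\in H$ for all $x\in\bigcup H$. Constructions of an atomic $H$, by induction on $|\bigcup H|$: (0) $\emptyset$ is the only construction of $\emptyset$; (1) if $|\bigcup H|\ge1$, $H$ connected, $x\in\bigcup H$, $K$ a construction of $H_{\bigcup H\setminus\{x\}}$, then $K\cup\{\bigcup H\}$ is a construction of $H$; (2) if $H$ is not connected with finest hypergraph partition $\{H_1,\dots,H_n\}$, $n\ge2$, and $K_i$ is a construction of $H_i$, then $K_1\cup\dots\cup K_n$ is a construction of $H$. A construct of $H$ is a subset of some construction of $H$ that contains every connected component of the carrier $\bigcup H$. $H$ is saturated if $X_1,X_2\in H$, $X_1\cap X_2\ne\emptyset$ imply $X_1\cup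 X_2\in H$; the saturated closure $\bar H$ is the saturated hypergraph obtained by adding to $H$ all sets equivalent under the following: $Y\subseteq \bigcup H$ is dispensable in $H$ if $H_Y\setminus\{Y\}$ is connected with carrier $Y$, and $\bar H$ is the largest hypergraph obtainable from $H$ by repeatedly adding dispensable sets. The poset $\mathcal A(H)$ has as elements all constructs of $H$ together with $\bar H^*=\bar H\cup\{*\}$ for a new element $*\notin\bigcup H$, ordered by $C_1\le C_2$ iff $C_2\subseteq C_1$. Its rank is $r=|\bigcup H|-n$; for $0\le k\le r$, the faces of rank $k$ are the constructs of cardinality $|\bigcup H|-k$, and $\bar H^*$ is the unique face of rank $-1$. Vertices are faces of rank $0$ (these are exactly the constructions), facets are faces of rank $r-1$. *)

theory Defs
  imports Main
begin

definition hypergraph :: "'a set set \<Rightarrow> bool" where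
  "hypergraph H \<longleftrightarrow> finite H \<and> (\<forall>X\<in>H. X \<noteq> {} \<and> finite X)"

definition restr :: "'a set set \<Rightarrow> 'a set \<Rightarrow> 'a set set" where
  "restr F Y = {X \<in> F. X \<subseteq> Y}"

definition hyp_partition :: "'a set set \<Rightarrow> 'a set set set \<Rightarrow> bool" where
  "hyp_partition H P \<longleftrightarrow>
     (\<forall>B\<in>P. B \<noteq> {}) \<and> \<Union>P = H \<and>
     (\<forall>B1\<in>P. \<forall>B2\<in>P. B1 \<noteq> B2 \<longrightarrow> B1 \<inter> B2 = {} \<and> \<Union>B1 \<inter> \<Union>B2 = {})"

definition connected_hg :: "'a set set \<Rightarrow> bool" where
  "connected_hg H \<longleftrightarrow> (\<exists>!P. hyp_partition H P)"

definition components :: "'a set set \<Rightarrow> 'a set set set" where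
  "components H = (THE P. hyp_partition H P \<and> (\<forall>B\<in>P. connected_hg B))"

definition conn_number :: "'a set set \<Rightarrow> nat" where
  "conn_number H = card (components H)"

definition atomic :: "'a set set \<Rightarrow> bool" where
  "atomic H \<longleftrightarrow> (\<forall>x\<in>\<Union>H. {x} \<in> H)"

inductive construction :: "'a set set \<Rightarrow> 'a set set \<Rightarrow> bool" where
  empty: "construction {} {}"
| conn: "\<lbrakk>\<Union>H \<noteq> {}; connected_hg H; x \<in> \<Union>H;
          construction (restr H (\<Union>H - {x})) K\<rbrakk>
         \<Longrightarrow> construction H (insert (\<Union>H) K)"
| disconn: "\<lbrakk>\<not> connected_hg H; card (components H) \<ge> 2;
             \<forall>B\<in>components H. construction B (Ks B)\<rbrakk>
         \<Longrightarrow> construction H (\<Union>B\<in>components H. Ks B)"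

definition construct :: "'a set set \<Rightarrow> 'a set set \<Rightarrow> bool" where
  "construct H C \<longleftrightarrow> (\<exists>K. construction H K \<and> C \<subseteq> K) \<and>
                      (\<forall>B\<in>components H. \<Union>B \<in> C)"

definition face_of_rank :: "'a set set \<Rightarrow> nat \<Rightarrow> 'a set set \<Rightarrow> bool" where
  "face_of_rank H k C \<longleftrightarrow> construct H C \<and> card C = card (\<Union>H) - k"

end

theory Submission
  imports Defs
begin

(* Every construct contains the set C0 of connected components of the carrier
   (one element per connected component of H), and every subset of a
   construction containing C0 is again a construct.  A vertex V is a
   construction of cardinality |carrier H|, and a facet is a construct of
   cardinality |C0| + 1.  Hence the facets below V are exactly the sets
   insert X C0 with X in V - C0, and there are |V| - |C0| = r of them. *)

section \<open>Hypergraph partitions\<close>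

lemma hyp_partitionD:
  assumes "hyp_partition H P"
  shows hyp_partition_block_nonempty: "B \<in> P \<Longrightarrow> B \<noteq> {}"
    and hyp_partition_covers: "\<Union>P = H"
    and hyp_partition_disjoint:
      "B1 \<in> P \<Longrightarrow> B2 \<in> P \<Longrightarrow> B1 \<noteq> B2 \<Longrightarrow> B1 \<inter> B2 = {}"
    and hyp_partition_carriers_disjoint:
      "B1 \<in> P \<Longrightarrow> B2 \<in> P \<Longrightarrow> B1 \<noteq> B2 \<Longrightarrow> \<Union>B1 \<inter> \<Union>B2 = {}"
  using assms unfolding hyp_partition_def by auto

lemma hyp_partitionI:
  assumes "\<And>B. B \<in> P \<Longrightarrow> B \<noteq> {}" and "\<Union>P = H"
    and "\<And>B1 B2. B1 \<in> P \<Longrightarrow> B2 \<in> P \<Longrightarrow> B1 \<noteq> B2 \<Longrightarrow> B1 \<inter> B2 = {} \<and> \<Union>B1 \<inter> \<Union>B2 = {}"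
  shows "hyp_partition H P"
  using assms unfolding hyp_partition_def by blast

lemma hyp_partition_block_subset: "hyp_partition H P \<Longrightarrow> B \<in> P \<Longrightarrow> B \<subseteq> H"
  using hyp_partition_covers by blast

lemma hyp_partition_trivial: "H \<noteq> {} \<Longrightarrow> hyp_partition H {H}"
  by (simp add: hyp_partition_def)

lemma connected_hg_partition:
  assumes "connected_hg B" "B \<noteq> {}" "hyp_partition B P"
  shows "P = {B}"
  using assms hyp_partition_trivial unfolding connected_hg_def by blast

lemma disconnected_proper_partition:
  assumes "H \<noteq> {}" "\<not> connected_hg H"
  obtains P where "hyp_partition H P" "\<And>B. B \<in> P \<Longrightarrow> B \<subset> H"
proof -
  obtain P where P: "hyp_partition H P" "P \<noteq> {H}"
    using assms hyp_partition_trivial unfolding connected_hg_def by blast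
  have "B \<subset> H" if B: "B \<in> P" for B
  proof -
    have "B \<noteq> H"
    proof
      assume "B = H"
      have "B' = H" if B': "B' \<in> P" for B'
      proof (rule ccontr)
        assume "B' \<noteq> H"
        then have "B' \<inter> B = {}" using hyp_partition_disjoint[OF P(1) B' B] \<open>B = H\<close> by simp
        moreover have "B' \<subseteq> B" using hyp_partition_block_subset[OF P(1) B'] \<open>B = H\<close> by simp
        ultimately show False using hyp_partition_block_nonempty[OF P(1) B'] by blast
      qed
      moreover have "P \<noteq> {}" using hyp_partition_covers[OF P(1)] assms(1) by blast
      ultimately show False using P(2) by blast
    qed
    then show ?thesis using hyp_partition_block_subset[OF P(1) B] by blast
  qed
  then show thesis using that P(1) by blast
qed

lemma hyp_partition_refine_blocks:
  assumes P: "hyp_partition H P" and f: "\<And>B. B \<in> P \<Longrightarrow> hyp_partition B (f B)"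
  shows "hyp_partition H (\<Union>B\<in>P. f B)"
proof (rule hyp_partitionI)
  show "C \<noteq> {}" if "C \<in> (\<Union>B\<in>P. f B)" for C
    using that f hyp_partition_block_nonempty by blast
  have covers: "\<And>B. B \<in> P \<Longrightarrow> \<Union>(f B) = B" using f hyp_partition_covers by blast
  have "\<Union>(\<Union>B\<in>P. f B) = (\<Union>B\<in>P. \<Union>(f B))" by blast
  also have "\<dots> = \<Union>P" by (simp cong: SUP_cong add: covers)
  finally show "\<Union>(\<Union>B\<in>P. f B) = H" using hyp_partition_covers[OF P] by simp
next
  fix C1 C2 assume "C1 \<in> (\<Union>B\<in>P. f B)" "C2 \<in> (\<Union>B\<in>P. f B)" and ne: "C1 \<noteq> C2"
  then obtain B1 B2 where B: "B1 \<in> P" "B2 \<in> P" "C1 \<in> f B1" "C2 \<in> f B2" by blast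
  show "C1 \<inter> C2 = {} \<and> \<Union>C1 \<inter> \<Union>C2 = {}"
  proof (cases "B1 = B2")
    case True
    have fB: "hyp_partition B1 (f B1)" using f B(1) .
    have "C2 \<in> f B1" using True B(4) by simp
    then show ?thesis
      using hyp_partition_disjoint[OF fB B(3)] hyp_partition_carriers_disjoint[OF fB B(3)] ne
      by blast
  next
    case False
    have "C1 \<subseteq> B1" "C2 \<subseteq> B2"
      using hyp_partition_block_subset[OF f[OF B(1)] B(3)]
        hyp_partition_block_subset[OF f[OF B(2)] B(4)] by blast+
    then show ?thesis
      using hyp_partition_disjoint[OF P B(1,2) False] hyp_partition_carriers_disjoint[OF P B(1,2) False]
      by blast
  qed
qed

lemma hyp_partition_trace:
  assumes P: "hyp_partition H P" and Q: "hyp_partition H Q" and B: "B \<in> P"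
  shows "hyp_partition B {B \<inter> C | C. C \<in> Q \<and> B \<inter> C \<noteq> {}}"
proof (rule hyp_partitionI)
  show "\<Union>{B \<inter> C | C. C \<in> Q \<and> B \<inter> C \<noteq> {}} = B"
  proof
    show "B \<subseteq> \<Union>{B \<inter> C | C. C \<in> Q \<and> B \<inter> C \<noteq> {}}"
    proof
      fix h assume h: "h \<in> B"
      then have "h \<in> \<Union>Q" using hyp_partition_block_subset[OF P B] hyp_partition_covers[OF Q] by blast
      then obtain C where C: "C \<in> Q" "h \<in> C" by blast
      then have "B \<inter> C \<in> {B \<inter> C | C. C \<in> Q \<and> B \<inter> C \<noteq> {}}" using h by blast
      then show "h \<in> \<Union>{B \<inter> C | C. C \<in> Q \<and> B \<inter> C \<noteq> {}}" using h C(2) by blast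
    qed
  qed blast
next
  fix X1 X2 assume "X1 \<in> {B \<inter> C | C. C \<in> Q \<and> B \<inter> C \<noteq> {}}"
    "X2 \<in> {B \<inter> C | C. C \<in> Q \<and> B \<inter> C \<noteq> {}}" and ne: "X1 \<noteq> X2"
  then obtain C1 C2 where C: "C1 \<in> Q" "C2 \<in> Q" "X1 = B \<inter> C1" "X2 = B \<inter> C2"
    by blast
  then have "C1 \<noteq> C2" using ne by blast
  then have "C1 \<inter> C2 = {}" "\<Union>C1 \<inter> \<Union>C2 = {}"
    using hyp_partition_disjoint[OF Q C(1,2)] hyp_partition_carriers_disjoint[OF Q C(1,2)] by auto
  then show "X1 \<inter> X2 = {} \<and> \<Union>X1 \<inter> \<Union>X2 = {}" using C(3,4) by blast
qed blast

lemma connected_block_within: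
  assumes P: "hyp_partition H P" and Q: "hyp_partition H Q"
    and B: "B \<in> P" and conn: "connected_hg B"
  obtains C where "C \<in> Q" "B \<subseteq> C"
proof -
  have Bne: "B \<noteq> {}" using hyp_partition_block_nonempty[OF P B] .
  have traces: "{B \<inter> C | C. C \<in> Q \<and> B \<inter> C \<noteq> {}} = {B}"
    using connected_hg_partition[OF conn Bne hyp_partition_trace[OF P Q B]] .
  obtain X where "X \<in> B" using Bne by blast
  then have "X \<in> \<Union>Q" using hyp_partition_block_subset[OF P B] hyp_partition_covers[OF Q] by blast
  then obtain C where "C \<in> Q" "X \<in> C" by blast
  then have "B \<inter> C \<in> {B \<inter> C | C. C \<in> Q \<and> B \<inter> C \<noteq> {}}" using \<open>X \<in> B\<close> by blast
  then have "B \<inter> C = B" unfolding traces by simp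
  then have "B \<subseteq> C" by blast
  then show thesis using that \<open>C \<in> Q\<close> by blast
qed

lemma connected_partitions_unique:
  assumes P: "hyp_partition H P" and Q: "hyp_partition H Q"
    and cP: "\<forall>B\<in>P. connected_hg B" and cQ: "\<forall>C\<in>Q. connected_hg C"
  shows "P = Q"
proof -
  have "P \<subseteq> Q" if P: "hyp_partition H P" and Q: "hyp_partition H Q"
    and cP: "\<forall>B\<in>P. connected_hg B" and cQ: "\<forall>C\<in>Q. connected_hg C" for P Q
  proof
    fix B assume B: "B \<in> P"
    obtain C where C: "C \<in> Q" "B \<subseteq> C"
      using connected_block_within[OF P Q B] cP B by blast
    obtain B' where B': "B' \<in> P" "C \<subseteq> B'"
      using connected_block_within[OF Q P C(1)] cQ C(1) by blast
    have "B = B'"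
      using hyp_partition_disjoint[OF P B B'(1)] hyp_partition_block_nonempty[OF P B] C B'
      by blast
    then show "B \<in> Q" using C B' by simp
  qed
  then show ?thesis using assms by blast
qed

text \<open>Every finite hypergraph has a partition into connected blocks: split a
  disconnected hypergraph into proper parts and partition these recursively.\<close>
lemma connected_partition_exists:
  assumes "finite H"
  shows "\<exists>P. hyp_partition H P \<and> (\<forall>B\<in>P. connected_hg B)"
  using assms
proof (induction H rule: finite_psubset_induct)
  case (psubset H)
  consider "H = {}" | "H \<noteq> {}" "connected_hg H" | "H \<noteq> {}" "\<not> connected_hg H" by blast
  then show ?case
  proof cases
    case 1
    then have "hyp_partition H {}" by (simp add: hyp_partition_def)
    then show ?thesis by blast
  next
    case 2
    then show ?thesis using hyp_partition_trivial by blast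
  next
    case 3
    obtain P where P: "hyp_partition H P" and proper: "\<And>B. B \<in> P \<Longrightarrow> B \<subset> H"
      using disconnected_proper_partition[OF 3] by blast
    have "\<forall>B\<in>P. \<exists>Q. hyp_partition B Q \<and> (\<forall>C\<in>Q. connected_hg C)"
      using psubset.IH[OF proper] by blast
    from bchoice[OF this] obtain f
      where f: "\<forall>B\<in>P. hyp_partition B (f B) \<and> (\<forall>C\<in>f B. connected_hg C)" ..
    have "hyp_partition H (\<Union>B\<in>P. f B)"
      using hyp_partition_refine_blocks[OF P] f by blast
    moreover have "\<forall>C\<in>(\<Union>B\<in>P. f B). connected_hg C" using f by blast
    ultimately show ?thesis by blast
  qed
qed

lemma components:
  assumes "finite H"
  shows "hyp_partition H (components H)" and "\<forall>B\<in>components H. connected_hg B"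
proof -
  obtain P where P: "hyp_partition H P" "\<forall>B\<in>P. connected_hg B"
    using connected_partition_exists[OF assms] by blast
  have "\<exists>!P. hyp_partition H P \<and> (\<forall>B\<in>P. connected_hg B)"
  proof (rule ex1I[of _ P])
    show "hyp_partition H P \<and> (\<forall>B\<in>P. connected_hg B)" using P by blast
    fix P' assume "hyp_partition H P' \<and> (\<forall>B\<in>P'. connected_hg B)"
    then show "P' = P" using connected_partitions_unique[OF _ P(1) _ P(2)] by blast
  qed
  then have "hyp_partition H (components H) \<and> (\<forall>B\<in>components H. connected_hg B)"
    unfolding components_def by (rule theI')
  then show "hyp_partition H (components H)" "\<forall>B\<in>components H. connected_hg B"
    by blast+
qed

section \<open>Components of the carrier and constructs\<close>

text \<open>If H has no empty edge, distinct blocks of a partition have distinct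
  (nonempty, disjoint) carriers, so the components of the carrier are as many
  as the connected components: their number is the connectedness number.\<close>
lemma card_component_carriers:
  assumes "finite H" and "\<forall>X\<in>H. X \<noteq> {}"
  shows "card (Union ` components H) = conn_number H"
proof -
  have P: "hyp_partition H (components H)" using components(1)[OF assms(1)] .
  have "inj_on Union (components H)"
  proof (rule inj_onI, rule ccontr)
    fix B1 B2 assume B: "B1 \<in> components H" "B2 \<in> components H" "\<Union>B1 = \<Union>B2" "B1 \<noteq> B2"
    then have "\<Union>B1 = {}" using hyp_partition_carriers_disjoint[OF P] by blast
    moreover obtain X where "X \<in> B1" "X \<in> H"
      using B hyp_partition_block_nonempty[OF P] hyp_partition_block_subset[OF P] by blast
    ultimately show False using assms(2) by blast
  qed
  then show ?thesis unfolding conn_number_def by (rule card_image)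
qed

lemma construct_components: "construct H F \<Longrightarrow> Union ` components H \<subseteq> F"
  unfolding construct_def by blast

lemma construct_subset:
  assumes "construct H V" "F \<subseteq> V" "Union ` components H \<subseteq> F"
  shows "construct H F"
  using assms unfolding construct_def by blast

lemma faces_below_construct:
  assumes V: "construct H V" and size: "card (\<Union>H) - k = card (Union ` components H) + 1"
  shows "{F. face_of_rank H k F \<and> F \<subseteq> V}
    = {F. Union ` components H \<subseteq> F \<and> F \<subseteq> V \<and> card F = card (Union ` components H) + 1}"
proof (intro Collect_cong iffI)
  fix F assume "face_of_rank H k F \<and> F \<subseteq> V"
  then show "Union ` components H \<subseteq> F \<and> F \<subseteq> V \<and> card F = card (Union ` components H) + 1"
    using construct_components[of H F] size unfolding face_of_rank_def by simp
next
  fix F assume "Union ` components H \<subseteq> F \<and> F \<subseteq> V \<and> card F = card (Union ` components H) + 1"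
  then show "face_of_rank H k F \<and> F \<subseteq> V"
    using construct_subset[OF V] size unfolding face_of_rank_def by simp
qed

section \<open>Counting one-element extensions\<close>

text \<open>The sets lying between A and a finite superset V and having exactly one
  more element than A are the sets insert X A with X in V - A.\<close>
lemma card_one_point_extensions:
  assumes "finite V" "A \<subseteq> V"
  shows "card {F. A \<subseteq> F \<and> F \<subseteq> V \<and> card F = card A + 1} = card (V - A)"
proof -
  have finA: "finite A" using assms finite_subset by blast
  have "{F. A \<subseteq> F \<and> F \<subseteq> V \<and> card F = card A + 1} = (\<lambda>X. insert X A) ` (V - A)"
  proof (intro set_eqI iffI)
    fix F assume F: "F \<in> {F. A \<subseteq> F \<and> F \<subseteq> V \<and> card F = card A + 1}"
    then have "card (F - A) = 1"
      using card_Diff_subset[OF finA] by (simp add: Diff_subset)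
    then obtain X where "F - A = {X}" by (rule card_1_singletonE)
    then show "F \<in> (\<lambda>X. insert X A) ` (V - A)" using F by blast
  next
    fix F assume "F \<in> (\<lambda>X. insert X A) ` (V - A)"
    then show "F \<in> {F. A \<subseteq> F \<and> F \<subseteq> V \<and> card F = card A + 1}"
      using assms finA by auto
  qed
  moreover have "inj_on (\<lambda>X. insert X A) (V - A)" by (rule inj_onI) blast
  ultimately show ?thesis by (simp add: card_image)
qed

theorem proposition5p2:
  fixes H :: "'a set set" and r :: nat
  assumes "hypergraph H" and "atomic H"
    and "r = card (\<Union>H) - conn_number H"
    and "0 < r"
  shows "\<forall>V. face_of_rank H 0 V \<longrightarrow>
           card {F. face_of_rank H (r - 1) F \<and> F \<subseteq> V} = r"
proof (intro allI impI)
  fix V assume V: "face_of_rank H 0 V"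
  define C0 where "C0 = Union ` components H"
  have cardC0: "card C0 = conn_number H"
    using assms(1) card_component_carriers unfolding hypergraph_def C0_def by blast
  have cardV: "card V = card (\<Union>H)" and conV: "construct H V"
    using V unfolding face_of_rank_def by auto
  have "0 < card V" using cardV assms(3,4) by linarith
  then have finV: "finite V" by (rule card_ge_0_finite)
  have C0V: "C0 \<subseteq> V" using construct_components[OF conV] unfolding C0_def .
  have facet_size: "card (\<Union>H) - (r - 1) = card C0 + 1" using assms(3,4) cardC0 by linarith
  have "{F. face_of_rank H (r - 1) F \<and> F \<subseteq> V} = {F. C0 \<subseteq> F \<and> F \<subseteq> V \<and> card F = card C0 + 1}"
    using faces_below_construct[OF conV facet_size[unfolded C0_def]] unfolding C0_def .
  also have "card \<dots> = card (V - C0)" using card_one_point_extensions[OF finV C0V] .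
  also have "\<dots> = r"
    using card_Diff_subset[OF finite_subset[OF C0V finV] C0V] cardV cardC0 assms(3) by simp
  finally show "card {F. face_of_rank H (r - 1) F \<and> F \<subseteq> V} = r" .
qed

end
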